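(* Let $\mathcal{F}$ be a strong regular facets-pairing structure on $\mathcal{C}^n$ and let $e\subset f$ be proper faces of $\mathcal{C}^n$ with $\dim f-\dim e=1$. Then either $|\widehat e|=|\widehat f|$ or $|\widehat e|=2|\widehat f|$, where $|\widehat g|$ denotes the number of faces in the face family $\widehat g$.
   Context: Let $[\pm n]=\{\pm1,\dots,\pm n\}$ and $\mathcal{C}^n=\{x\in\mathbb{R}^n: -\tfrac14\le x_i\le\tfrac14\}$. For $1\le i\le n$, $\mathbf{F}(i)$ and $\mathbf{F}(-i)$ denote the facets of $\mathcal{C}^n$ in $\{x_i=\tfrac14\}$ and $\{x_i=-\tfrac14\}$; for $j_1,\dots,j_s\in[\pm n]$ with distinct absolute values, $\mathbf{F}(j_1,\dots,j_s)=\bigcap_i\mathbf{F}(j_i)$ (every proper face has this form). A signed permutation is a bijection $\sigma$ of $[\pm n]$ with $\sigma(-k)=-\sigma(k)$. A facets-pairing structure on $\mathcal{C}^n$ is a pair $(\omega,\{\tau_j\})$ where $\omega$ is a bijection of $[\pm n]$ with $\omega\circ\omega=\mathrm{id}$ and $\tau_j:\mathbf{F}(j)\to\mathbf{F}(\omega(j))$ are face-preserving homeomorphisms with $\tau_{\omega(j)}=\tau_j^{-1}$, such that for all $|j|\ne|k|$, writing $\tau_j(\mathbf{F}(j,k))=\mathbf{F}(\omega(j),k')$ and $\tau_k(\mathbf{F}(j,k))=\mathbf{F}(j',\omega(k))$, one has $\tau_{k'}\tau_j(p)=\tau_{j'}\tau_k(p)$ for all $p\in\mathbf{F}(j,k)$.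 It is regular if each $\tau_j$ is a Euclidean isometry and $\omega$ is a signed permutation. A composition $\tau_{k_m}\circ\dots\circ\tau_{k_1}$ applied to a proper face $f$ is valid if $f\subset\mathbf{F}(k_1)$ and $\tau_{k_i}\circ\dots\circ\tau_{k_1}(f)\subset\mathbf{F}(k_{i+1})$ for $1\le i<m$ ($m=0$ allowed). The face family $\widehat f$ is the set of faces $\tau_{k_m}\circ\dots\circ\tau_{k_1}(f)$ over all valid compositions. For a proper face $f$ let $\Xi(f)$ be the set of facets containing $f$. If $f\subset\mathbf{F}(k)$ and $f'=\tau_k(f)$, define $\Psi^f_k:\Xi(f)\to\Xi(f')$ by $\Psi^f_k(\mathbf{F}(k))=\mathbf{F}(\omega(k))$ and, for $F'\in\Xi(f)\setminus\{\mathbf{F}(k)\}$, $\Psi^f_k(F')$ is the facet $G$ with $G\cap\mathbf{F}(\omega(k))=\tau_k(F'\cap\mathbf{F}(k))$. $\mathcal{F}$ is strong if for every proper face $f$ and any two valid compositions mapping $f$ onto the same face $\widetilde f$: (a) they agree at every point of $f$; and (b) the corresponding composites of the maps $\Psi$ along the two compositions coincide as maps $\Xi(f)\to\Xi(\widetilde f)$. *)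

theory Defs
  imports "HOL-Analysis.Analysis"
begin

text \<open>The cube C^n = [-1/4,1/4]^n, with coordinates indexed by a finite type 'n
 (so n = CARD('n)). A signed index j in [+-n] is a pair (i, b) with i :: 'n and
 b = True meaning +i, b = False meaning -i.\<close>

type_synonym 'n sidx = "'n \<times> bool"

definition sneg :: "'n sidx \<Rightarrow> 'n sidx" where
  "sneg j = (fst j, \<not> snd j)"

definition cube :: "(real ^ 'n) set" where
  "cube = {x. \<forall>i. - (1/4) \<le> x $ i \<and> x $ i \<le> 1/4}"

definition sgnset :: "'n sidx set \<Rightarrow> bool" where
  "sgnset J \<longleftrightarrow> (\<forall>j\<in>J. \<forall>k\<in>J. fst j = fst k \<longrightarrow> j = k)"

definition cface :: "'n sidx set \<Rightarrow> (real ^ 'n) set" where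
  "cface J = {x \<in> cube. \<forall>j\<in>J. x $ fst j = (if snd j then 1/4 else - (1/4))}"

definition facet :: "'n sidx \<Rightarrow> (real ^ 'n) set" where
  "facet j = cface {j}"

definition proper_face :: "(real ^ 'n) set \<Rightarrow> bool" where
  "proper_face f \<longleftrightarrow> (\<exists>J. sgnset J \<and> J \<noteq> {} \<and> f = cface J)"

definition signed_perm :: "('n sidx \<Rightarrow> 'n sidx) \<Rightarrow> bool" where
  "signed_perm \<omega> \<longleftrightarrow> bij \<omega> \<and> (\<forall>k. \<omega> (sneg k) = sneg (\<omega> k))"

definition fps :: "('n sidx \<Rightarrow> 'n sidx) \<Rightarrow> ('n sidx \<Rightarrow> real ^ 'n \<Rightarrow> real ^ 'n) \<Rightarrow> bool" where
  "fps \<omega> \<tau> \<longleftrightarrow>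
     bij \<omega> \<and> (\<forall>j. \<omega> (\<omega> j) = j) \<and>
     (\<forall>j. homeomorphism (facet j) (facet (\<omega> j)) (\<tau> j) (\<tau> (\<omega> j))) \<and>
     (\<forall>j g. proper_face g \<longrightarrow> g \<subseteq> facet j \<longrightarrow> proper_face (\<tau> j ` g)) \<and>
     (\<forall>j k j' k'. fst j \<noteq> fst k \<longrightarrow>
        fst (\<omega> j) \<noteq> fst k' \<longrightarrow> fst j' \<noteq> fst (\<omega> k) \<longrightarrow>
        \<tau> j ` cface {j, k} = cface {\<omega> j, k'} \<longrightarrow>
        \<tau> k ` cface {j, k} = cface {j', \<omega> k} \<longrightarrow>
        (\<forall>p\<in>cface {j, k}. \<tau> k' (\<tau> j p) = \<tau> j' (\<tau> k p)))"

definition regular_fps :: "('n sidx \<Rightarrow> 'n sidx) \<Rightarrow> ('n sidx \<Rightarrow> real ^ 'n \<Rightarrow> real ^ 'n) \<Rightarrow> bool" where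
  "regular_fps \<omega> \<tau> \<longleftrightarrow> fps \<omega> \<tau> \<and> signed_perm \<omega> \<and>
     (\<forall>j. \<forall>x\<in>facet j. \<forall>y\<in>facet j. dist (\<tau> j x) (\<tau> j y) = dist x y)"

text \<open>Valid compositions: a list [k_1,...,k_m] applied to f (k_1 first).\<close>
fun valid_comp :: "('n sidx \<Rightarrow> real ^ 'n \<Rightarrow> real ^ 'n) \<Rightarrow> (real ^ 'n) set \<Rightarrow> 'n sidx list \<Rightarrow> bool" where
  "valid_comp \<tau> f [] = True"
| "valid_comp \<tau> f (k # ks) = (f \<subseteq> facet k \<and> valid_comp \<tau> (\<tau> k ` f) ks)"

fun comp_map :: "('n sidx \<Rightarrow> real ^ 'n \<Rightarrow> real ^ 'n) \<Rightarrow> 'n sidx list \<Rightarrow> real ^ 'n \<Rightarrow> real ^ 'n" where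
  "comp_map \<tau> [] = id"
| "comp_map \<tau> (k # ks) = comp_map \<tau> ks \<circ> \<tau> k"

definition face_family :: "('n sidx \<Rightarrow> real ^ 'n \<Rightarrow> real ^ 'n) \<Rightarrow> (real ^ 'n) set \<Rightarrow> (real ^ 'n) set set" where
  "face_family \<tau> f = {comp_map \<tau> ks ` f | ks. valid_comp \<tau> f ks}"

text \<open>The map \<Psi>^f_k on facets containing f, facets represented by their signed index.\<close>
definition Psi :: "('n sidx \<Rightarrow> 'n sidx) \<Rightarrow> ('n sidx \<Rightarrow> real ^ 'n \<Rightarrow> real ^ 'n) \<Rightarrow> 'n sidx \<Rightarrow> 'n sidx \<Rightarrow> 'n sidx" where
  "Psi \<omega> \<tau> k l = (if l = k then \<omega> k
      else (SOME m. facet m \<inter> facet (\<omega> k) = \<tau> k ` (facet l \<inter> facet k)))"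

fun Psi_comp :: "('n sidx \<Rightarrow> 'n sidx) \<Rightarrow> ('n sidx \<Rightarrow> real ^ 'n \<Rightarrow> real ^ 'n) \<Rightarrow> 'n sidx list \<Rightarrow> 'n sidx \<Rightarrow> 'n sidx" where
  "Psi_comp \<omega> \<tau> [] = id"
| "Psi_comp \<omega> \<tau> (k # ks) = Psi_comp \<omega> \<tau> ks \<circ> Psi \<omega> \<tau> k"

definition strong_fps :: "('n sidx \<Rightarrow> 'n sidx) \<Rightarrow> ('n sidx \<Rightarrow> real ^ 'n \<Rightarrow> real ^ 'n) \<Rightarrow> bool" where
  "strong_fps \<omega> \<tau> \<longleftrightarrow> fps \<omega> \<tau> \<and>
     (\<forall>f ks ks'. proper_face f \<longrightarrow> valid_comp \<tau> f ks \<longrightarrow> valid_comp \<tau> f ks' \<longrightarrow>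
        comp_map \<tau> ks ` f = comp_map \<tau> ks' ` f \<longrightarrow>
        (\<forall>p\<in>f. comp_map \<tau> ks p = comp_map \<tau> ks' p) \<and>
        (\<forall>l. f \<subseteq> facet l \<longrightarrow> Psi_comp \<omega> \<tau> ks l = Psi_comp \<omega> \<tau> ks' l))"

end

theory Submission
  imports Defs
begin

(* A proper face is cface G for a unique sign set G, inclusion of
      faces reverses inclusion of sign sets, and a codimension-one inclusion
      e \<subseteq> f means e = cface (insert k J), f = cface J with k \<notin> J.
   2. Pairing maps on faces.  In a facets-pairing structure, \<tau> j sends
      cface G (j \<in> G) onto cface (\<Psi>_j ` G), with \<Psi>_j injective on G; hence a valid
      composition ks sends cface G onto cface (\<Psi>_ks ` G).
   3. Counting.  Let ks range over valid compositions of f.  Every member of the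
      family of e is either ks(e) or its neighbour \<tau>_m(ks(e)) across the facet
      m = \<Psi>_ks(k).  Strongness makes ks \<mapsto> ks(e), ks \<mapsto> ks(f) and
      ks \<mapsto> \<tau>_m(ks(e)) have the same fibres, so both kinds of faces are |f^| in
      number; and whether a neighbour is itself of the first kind does not depend
      on ks, so the two kinds either coincide or are disjoint. *)

section \<open>Faces of the cube\<close>

text \<open>The barycentre of cface A: it lies on exactly the facets listed in A.\<close>
definition centre :: "'n::finite sidx set \<Rightarrow> real ^ 'n" where
  "centre A = (\<chi> i. if (i, True) \<in> A then 1/4 else if (i, False) \<in> A then - (1/4) else 0)"

lemma cface_mem: "x \<in> cface A \<longleftrightarrow> x \<in> cube \<and> (\<forall>j\<in>A. x $ fst j = (if snd j then 1/4 else - (1/4)))"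
  by (simp add: cface_def)

lemma sgnset_pair: "sgnset {a, b} \<longleftrightarrow> (fst a = fst b \<longrightarrow> a = b)"
  unfolding sgnset_def by auto

lemma sgnset_subset: "sgnset A \<Longrightarrow> B \<subseteq> A \<Longrightarrow> sgnset B"
  unfolding sgnset_def by blast

lemma sgnset_fst_neq: "sgnset A \<Longrightarrow> j \<in> A \<Longrightarrow> l \<in> A \<Longrightarrow> l \<noteq> j \<Longrightarrow> fst j \<noteq> fst l"
  unfolding sgnset_def by blast

lemma centre_in_cface:
  assumes "sgnset A"
  shows "centre A \<in> cface A"
  unfolding cface_mem
proof
  show "centre A \<in> cube" by (auto simp: cube_def centre_def)
  show "\<forall>j\<in>A. centre A $ fst j = (if snd j then 1/4 else - (1/4))"
  proof
    fix j assume j: "j \<in> A"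
    obtain i s where js: "j = (i, s)" by (cases j)
    have "s = False \<Longrightarrow> (i, True) \<notin> A" using assms j js unfolding sgnset_def by fastforce
    then show "centre A $ fst j = (if snd j then 1/4 else - (1/4))"
      using j js by (cases s) (auto simp: centre_def)
  qed
qed

lemma cface_nonempty: "sgnset A \<Longrightarrow> cface A \<noteq> {}"
  using centre_in_cface by blast

lemma sgnset_if_cface_nonempty:
  assumes "cface A \<noteq> {}"
  shows "sgnset A"
  unfolding sgnset_def
proof (intro ballI impI)
  fix j k assume j: "j \<in> A" and k: "k \<in> A" and same: "fst j = fst k"
  obtain x where "x \<in> cface A" using assms by blast
  then have "x $ fst j = (if snd j then 1/4 else - (1/4))" "x $ fst k = (if snd k then 1/4 else - (1/4))"
    using j k by (auto simp: cface_mem)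
  then have "snd j = snd k" using same by (auto split: if_splits)
  then show "j = k" using same by (simp add: prod_eq_iff)
qed

text \<open>Faces are ordered by reverse inclusion of their sign sets; the centre of cface A
  witnesses the nontrivial direction.\<close>
lemma cface_subset_iff:
  assumes "sgnset A"
  shows "cface A \<subseteq> cface B \<longleftrightarrow> B \<subseteq> A"
proof
  assume sub: "cface A \<subseteq> cface B"
  show "B \<subseteq> A"
  proof
    fix j assume j: "j \<in> B"
    obtain i s where js: "j = (i, s)" by (cases j)
    have "centre A \<in> cface B" using centre_in_cface[OF assms] sub by blast
    then have "centre A $ i = (if s then 1/4 else - (1/4))" using j js by (auto simp: cface_mem)
    then show "j \<in> A" using js by (cases s) (auto simp: centre_def split: if_splits)
  qed
qed (auto simp: cface_def)

lemma cface_antimono: "A \<subseteq> B \<Longrightarrow> cface B \<subseteq> cface A"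
  by (auto simp: cface_def)

lemma cface_inj: "sgnset A \<Longrightarrow> sgnset B \<Longrightarrow> cface A = cface B \<Longrightarrow> A = B"
  using cface_subset_iff by blast

lemma cface_Int: "cface A \<inter> cface B = cface (A \<union> B)"
  by (auto simp: cface_def)

lemma cface_subset_facet_iff: "sgnset A \<Longrightarrow> cface A \<subseteq> facet k \<longleftrightarrow> k \<in> A"
  unfolding facet_def by (simp add: cface_subset_iff)

lemma cface_eq_INT_ridges:
  assumes "j \<in> A"
  shows "cface A = (\<Inter>l\<in>A. cface {j, l})"
proof (rule set_eqI)
  fix x
  have "x \<in> (\<Inter>l\<in>A. cface {j, l}) \<longleftrightarrow> (\<forall>l\<in>A. x \<in> cface {j, l})" by blast
  also have "\<dots> \<longleftrightarrow> x \<in> cface A" using assms unfolding cface_mem by auto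
  finally show "x \<in> cface A \<longleftrightarrow> x \<in> (\<Inter>l\<in>A. cface {j, l})" by simp
qed

lemma proper_faceE:
  assumes "proper_face g"
  obtains H where "sgnset H" "H \<noteq> {}" "g = cface H"
  using assms unfolding proper_face_def by blast

lemma proper_faceI: "sgnset H \<Longrightarrow> H \<noteq> {} \<Longrightarrow> proper_face (cface H)"
  unfolding proper_face_def by blast

text \<open>Dropping a sign from A strictly enlarges the affine hull of the face: the centre of
  the smaller sign set leaves the hyperplane of the dropped facet.\<close>
lemma aff_dim_cface_strict_mono:
  assumes sgA: "sgnset (A :: 'n::finite sidx set)" and BA: "B \<subset> A"
  shows "aff_dim (cface A) < aff_dim (cface B)"
proof -
  obtain i s where isA: "(i, s) \<in> A" and isB: "(i, s) \<notin> B" using BA by auto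
  define c :: real where "c = (if s then 1/4 else - (1/4))"
  define L where "L = {x :: real ^ 'n. x $ i = c}"
  have "affine L"
    unfolding affine_def L_def by (auto simp: algebra_simps simp flip: distrib_right)
  moreover have "cface A \<subseteq> L"
  proof
    fix x assume "x \<in> cface A"
    then have "x $ fst (i, s) = (if snd (i, s) then 1/4 else - (1/4))" using isA unfolding cface_mem by blast
    then show "x \<in> L" by (simp add: L_def c_def)
  qed
  ultimately have hullA: "affine hull (cface A) \<subseteq> L" by (rule hull_minimal[rotated])
  have sgB: "sgnset B" using sgA BA sgnset_subset by blast
  have "(i, \<not> s) \<notin> A" using sgA isA unfolding sgnset_def by (metis fst_conv prod.inject)
  then have "(i, True) \<notin> B \<and> (i, False) \<notin> B" using isB BA by (cases s) auto
  then have "centre B \<notin> L" by (auto simp: centre_def L_def c_def)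
  moreover have "centre B \<in> affine hull (cface B)"
    by (rule subsetD[OF hull_subset centre_in_cface[OF sgB]])
  ultimately have "\<not> affine hull (cface B) \<subseteq> affine hull (cface A)" using hullA by (meson subsetD)
  moreover have "affine hull (cface A) \<subseteq> affine hull (cface B)"
    using BA by (intro hull_mono cface_antimono) auto
  ultimately show ?thesis by (intro aff_dim_psubset) blast
qed

lemma codim_one_faceE:
  fixes e f :: "(real ^ 'n::finite) set"
  assumes "proper_face e" "proper_face f" "e \<subseteq> f" "aff_dim f - aff_dim e = 1"
  obtains k J where "sgnset (insert k J)" "k \<notin> J" "J \<noteq> {}"
    "e = cface (insert k J)" "f = cface J"
proof -
  obtain E where sgE: "sgnset E" and eE: "e = cface E" using assms(1) by (rule proper_faceE)
  obtain F where sgF: "sgnset F" and Fne: "F \<noteq> {}" and fF: "f = cface F"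
    using assms(2) by (rule proper_faceE)
  have FE: "F \<subseteq> E" using cface_subset_iff[OF sgE] assms(3) eE fF by simp
  have "F \<noteq> E" using assms(4) eE fF by auto
  then obtain k where kE: "k \<in> E" and kF: "k \<notin> F" using FE by blast
  have "E = insert k F"
  proof (rule ccontr)
    assume "E \<noteq> insert k F"
    then have ME: "insert k F \<subset> E" using FE kE by blast
    have "aff_dim e < aff_dim (cface (insert k F))"
      using aff_dim_cface_strict_mono[OF sgE ME] eE by simp
    moreover have "aff_dim (cface (insert k F)) < aff_dim f"
    proof -
      have "sgnset (insert k F)" using sgnset_subset[OF sgE] ME by blast
      moreover have "F \<subset> insert k F" using kF by blast
      ultimately show ?thesis using aff_dim_cface_strict_mono fF by blast
    qed
    ultimately show False using assms(4) by simp
  qed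
  then show thesis using that sgE kF Fne eE fF by simp
qed

section \<open>Compositions of pairing maps\<close>

lemma valid_comp_append:
  "valid_comp \<tau> f (xs @ ys) \<longleftrightarrow> valid_comp \<tau> f xs \<and> valid_comp \<tau> (comp_map \<tau> xs ` f) ys"
  by (induction xs arbitrary: f) (auto simp: image_comp)

lemma comp_map_append: "comp_map \<tau> (xs @ ys) = comp_map \<tau> ys \<circ> comp_map \<tau> xs"
  by (induction xs) (auto simp: comp_assoc)

lemma comp_map_snoc_image: "comp_map \<tau> (ks @ [m]) ` S = \<tau> m ` comp_map \<tau> ks ` S"
  by (simp add: comp_map_append image_comp)

lemma Psi_comp_snoc: "Psi_comp \<omega> \<tau> (ks @ [m]) = Psi \<omega> \<tau> m \<circ> Psi_comp \<omega> \<tau> ks"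
  by (induction ks) (auto simp: comp_assoc)

lemma valid_comp_subface: "valid_comp \<tau> f ks \<Longrightarrow> e \<subseteq> f \<Longrightarrow> valid_comp \<tau> e ks"
proof (induction ks arbitrary: f e)
  case (Cons k ks)
  then show ?case using Cons.IH[of "\<tau> k ` f" "\<tau> k ` e"] by (auto simp: image_mono)
qed simp

section \<open>Pairing maps act on faces through \<open>\<Psi>\<close>\<close>

locale pairing =
  fixes \<omega> :: "'n::finite sidx \<Rightarrow> 'n sidx" and \<tau> :: "'n sidx \<Rightarrow> real ^ 'n \<Rightarrow> real ^ 'n"
  assumes fps: "fps \<omega> \<tau>"
begin

abbreviation vc where "vc \<equiv> valid_comp \<tau>"
abbreviation cm where "cm \<equiv> comp_map \<tau>"
abbreviation PS where "PS \<equiv> Psi \<omega> \<tau>"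
abbreviation PC where "PC \<equiv> Psi_comp \<omega> \<tau>"

lemma omega_involution [simp]: "\<omega> (\<omega> j) = j"
  using fps unfolding fps_def by blast

lemma tau_homeomorphism: "homeomorphism (facet j) (facet (\<omega> j)) (\<tau> j) (\<tau> (\<omega> j))"
  using fps unfolding fps_def by blast

lemma tau_facet_image: "\<tau> j ` facet j = facet (\<omega> j)"
  using tau_homeomorphism[of j] unfolding homeomorphism_def by blast

lemma tau_inverse: "x \<in> facet j \<Longrightarrow> \<tau> (\<omega> j) (\<tau> j x) = x"
  using tau_homeomorphism[of j] unfolding homeomorphism_def by blast

lemma tau_inj_on: "inj_on (\<tau> j) (facet j)"
  by (metis inj_on_inverseI tau_inverse)

lemma tau_image_cancel: "S \<subseteq> facet m \<Longrightarrow> \<tau> (\<omega> m) ` \<tau> m ` S = S"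
  by (simp add: image_comp subset_iff tau_inverse cong: image_cong)

lemma tau_compat:
  "fst j \<noteq> fst k \<Longrightarrow> fst (\<omega> j) \<noteq> fst k' \<Longrightarrow> fst j' \<noteq> fst (\<omega> k) \<Longrightarrow>
   \<tau> j ` cface {j, k} = cface {\<omega> j, k'} \<Longrightarrow> \<tau> k ` cface {j, k} = cface {j', \<omega> k} \<Longrightarrow>
   p \<in> cface {j, k} \<Longrightarrow> \<tau> k' (\<tau> j p) = \<tau> j' (\<tau> k p)"
  using fps unfolding fps_def by blast

lemma Psi_self [simp]: "PS j j = \<omega> j"
  by (simp add: Psi_def)

lemma tau_face_image:
  assumes "sgnset G" "j \<in> G"
  obtains H where "sgnset H" "\<omega> j \<in> H" "\<tau> j ` cface G = cface H"
proof -
  have sub: "cface G \<subseteq> facet j" using assms cface_subset_facet_iff by blast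
  have "proper_face (\<tau> j ` cface G)"
    using fps sub proper_faceI[OF assms(1)] assms(2) unfolding fps_def by blast
  then obtain H where sgH: "sgnset H" and H: "\<tau> j ` cface G = cface H" by (rule proper_faceE)
  have "cface H \<subseteq> facet (\<omega> j)" using H sub tau_facet_image by blast
  then show thesis using that sgH H cface_subset_facet_iff by blast
qed

text \<open>The ridge \<open>F(j,l)\<close> of facet j is sent to a ridge \<open>F(\<omega> j, l')\<close> of facet \<open>\<omega> j\<close>:
  its image lies strictly between facet \<open>\<omega> j\<close> and any smaller face, as pulling back
  by the inverse map \<open>\<tau> (\<omega> j)\<close> shows.\<close>
lemma ridge_image:
  assumes jl: "fst j \<noteq> fst l"
  obtains l' where "fst l' \<noteq> fst (\<omega> j)" "\<tau> j ` cface {j, l} = cface {\<omega> j, l'}"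
proof -
  have sgX: "sgnset {j, l}" using jl by (simp add: sgnset_pair)
  have X_sub: "cface {j, l} \<subseteq> facet j" by (simp add: cface_subset_facet_iff[OF sgX])
  obtain H where sgH: "sgnset H" and ojH: "\<omega> j \<in> H" and XH: "\<tau> j ` cface {j, l} = cface H"
    using tau_face_image[OF sgX] by blast
  have "H \<noteq> {\<omega> j}"
  proof
    assume "H = {\<omega> j}"
    then have "\<tau> j ` cface {j, l} = \<tau> j ` facet j" using XH tau_facet_image by (simp add: facet_def)
    then have "cface {j, l} = cface {j}"
      using inj_on_image_eq_iff[OF tau_inj_on X_sub] by (simp add: facet_def)
    moreover have "sgnset {j}" by (simp add: sgnset_def)
    ultimately have "{j, l} = {j}" using cface_inj[OF sgX] by blast
    then show False using jl by auto
  qed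
  then obtain l' where l'H: "l' \<in> H" and l'_ne: "l' \<noteq> \<omega> j" using ojH by blast
  have "H = {\<omega> j, l'}"
  proof (rule ccontr)
    assume "H \<noteq> {\<omega> j, l'}"
    then have H'H: "{\<omega> j, l'} \<subset> H" using ojH l'H by blast
    have sgH': "sgnset {\<omega> j, l'}" using sgnset_subset[OF sgH] H'H by blast
    obtain G where sgG: "sgnset G" and jG: "j \<in> G" and GH': "\<tau> (\<omega> j) ` cface {\<omega> j, l'} = cface G"
      using tau_face_image[OF sgH', of "\<omega> j"] by auto
    have H'_sub: "cface {\<omega> j, l'} \<subseteq> facet (\<omega> j)" by (simp add: cface_subset_facet_iff[OF sgH'])
    have pullback: "\<tau> j ` cface G = cface {\<omega> j, l'}"
      using tau_image_cancel[OF H'_sub] GH' by simp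
    have "cface H \<subseteq> cface {\<omega> j, l'}" using H'H by (intro cface_antimono) blast
    then have "cface {j, l} \<subseteq> cface G"
      using XH GH' tau_image_cancel[OF X_sub] by (metis image_mono)
    then have "G \<subseteq> {j, l}" using cface_subset_iff[OF sgX] by blast
    then consider "G = {j}" | "G = {j, l}" using jG by blast
    then show False
    proof cases
      case 1
      then have "cface {\<omega> j, l'} = cface {\<omega> j}" using pullback tau_facet_image by (simp add: facet_def)
      then show False using cface_inj[OF sgH', of "{\<omega> j}"] l'_ne by (auto simp: sgnset_def)
    next
      case 2
      then have "cface {\<omega> j, l'} = cface H" using pullback XH by simp
      then show False using cface_inj[OF sgH' sgH] H'H by blast
    qed
  qed
  moreover have "fst l' \<noteq> fst (\<omega> j)" using sgH l'H ojH l'_ne unfolding sgnset_def by blast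
  ultimately show thesis using that XH by blast
qed

lemma Psi_ridge:
  assumes jl: "fst j \<noteq> fst l"
  shows "\<tau> j ` cface {j, l} = cface {\<omega> j, PS j l}" "fst (PS j l) \<noteq> fst (\<omega> j)"
proof -
  obtain l' where l': "fst l' \<noteq> fst (\<omega> j)" and XH: "\<tau> j ` cface {j, l} = cface {\<omega> j, l'}"
    using ridge_image[OF jl] by blast
  have ridge: "facet l \<inter> facet j = cface {j, l}" "facet m \<inter> facet (\<omega> j) = cface {\<omega> j, m}" for m
    by (simp_all add: facet_def cface_Int insert_commute)
  have "l \<noteq> j" using jl by auto
  then have "facet (PS j l) \<inter> facet (\<omega> j) = \<tau> j ` (facet l \<inter> facet j)"
    unfolding Psi_def using someI[of "\<lambda>m. facet m \<inter> facet (\<omega> j) = \<tau> j ` (facet l \<inter> facet j)" l']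
    by (simp add: ridge XH)
  then have eq: "cface {\<omega> j, PS j l} = cface {\<omega> j, l'}" using XH by (simp add: ridge)
  have sg2: "sgnset {\<omega> j, l'}" using l' by (auto simp: sgnset_pair)
  then have "sgnset {\<omega> j, PS j l}" using eq cface_nonempty sgnset_if_cface_nonempty by metis
  then have "{\<omega> j, PS j l} = {\<omega> j, l'}" using cface_inj sg2 eq by blast
  then have "PS j l = l'" using l' by (auto simp: doubleton_eq_iff)
  then show "\<tau> j ` cface {j, l} = cface {\<omega> j, PS j l}" "fst (PS j l) \<noteq> fst (\<omega> j)"
    using XH l' by simp_all
qed

lemma Psi_inj_on:
  assumes sg: "sgnset G" and jG: "j \<in> G"
  shows "inj_on (PS j) G"
proof (rule inj_onI)
  fix l1 l2 assume l1: "l1 \<in> G" and l2: "l2 \<in> G" and eq: "PS j l1 = PS j l2"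
  have other: "fst j \<noteq> fst l" if "l \<in> G" "l \<noteq> j" for l using sgnset_fst_neq[OF sg jG that(1)] that(2) .
  have not_omega: "PS j l \<noteq> \<omega> j" if "l \<in> G" "l \<noteq> j" for l
    using Psi_ridge(2)[OF other[OF that]] by auto
  show "l1 = l2"
  proof (cases "l1 = j \<or> l2 = j")
    case True
    then show ?thesis using eq not_omega l1 l2 by (metis Psi_self)
  next
    case False
    then have "\<tau> j ` cface {j, l1} = \<tau> j ` cface {j, l2}"
      using eq Psi_ridge(1)[OF other] l1 l2 by metis
    moreover have "cface {j, l1} \<subseteq> facet j" "cface {j, l2} \<subseteq> facet j"
      by (auto simp: facet_def cface_def)
    ultimately have "cface {j, l1} = cface {j, l2}" using inj_on_image_eq_iff[OF tau_inj_on] by blast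
    moreover have "sgnset {j, l1}" "sgnset {j, l2}" using other False l1 l2 by (auto simp: sgnset_pair)
    ultimately have "{j, l1} = {j, l2}" using cface_inj by blast
    then show ?thesis using False by (auto simp: doubleton_eq_iff)
  qed
qed

text \<open>The face \<open>F(G)\<close> with \<open>j \<in> G\<close> is sent to \<open>F(\<Psi>\<^sub>j ` G)\<close>: intersect the ridge images.\<close>
lemma tau_cface_image:
  assumes sg: "sgnset G" and jG: "j \<in> G"
  shows "\<tau> j ` cface G = cface (PS j ` G)"
proof -
  have ridges_sub: "\<forall>l\<in>G. cface {j, l} \<subseteq> facet j" by (auto simp: facet_def cface_def)
  have ridge: "\<tau> j ` cface {j, l} = cface {\<omega> j, PS j l}" if "l \<in> G" for l
  proof (cases "l = j")
    case True
    then show ?thesis using tau_facet_image[of j] by (simp add: facet_def)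
  next
    case False
    then show ?thesis using Psi_ridge(1) sgnset_fst_neq[OF sg jG that] by blast
  qed
  have "\<tau> j ` cface G = (\<Inter>l\<in>G. \<tau> j ` cface {j, l})"
    using cface_eq_INT_ridges[OF jG] image_INT[OF tau_inj_on ridges_sub jG] by simp
  also have "\<dots> = (\<Inter>m\<in>PS j ` G. cface {\<omega> j, m})" by (simp add: ridge image_comp)
  also have "\<dots> = cface (PS j ` G)"
    using jG by (intro cface_eq_INT_ridges[symmetric]) (metis Psi_self imageI)
  finally show ?thesis .
qed

lemma comp_map_cface:
  assumes "sgnset G" "vc (cface G) ks"
  shows "cm ks ` cface G = cface (PC ks ` G) \<and> sgnset (PC ks ` G) \<and> inj_on (PC ks) G"
  using assms
proof (induction ks arbitrary: G)
  case (Cons k ks)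
  have kG: "k \<in> G" using Cons.prems cface_subset_facet_iff[OF Cons.prems(1)] by simp
  have img: "\<tau> k ` cface G = cface (PS k ` G)" by (rule tau_cface_image[OF Cons.prems(1) kG])
  then have "sgnset (PS k ` G)" using cface_nonempty[OF Cons.prems(1)] sgnset_if_cface_nonempty by blast
  moreover have "vc (cface (PS k ` G)) ks" using Cons.prems(2) img by simp
  ultimately have IH: "cm ks ` cface (PS k ` G) = cface (PC ks ` PS k ` G)"
     "sgnset (PC ks ` PS k ` G)" "inj_on (PC ks) (PS k ` G)"
    using Cons.IH by blast+
  have "cm (k # ks) ` cface G = cm ks ` \<tau> k ` cface G" by (simp add: image_comp)
  also have "\<dots> = cface (PC ks ` PS k ` G)" using img IH(1) by simp
  also have "\<dots> = cface (PC (k # ks) ` G)" by (simp add: image_comp)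
  finally have "cm (k # ks) ` cface G = cface (PC (k # ks) ` G)" .
  moreover have "inj_on (PC (k # ks)) G" using comp_inj_on[OF Psi_inj_on[OF Cons.prems(1) kG] IH(3)] by simp
  ultimately show ?case using IH(2) by (simp add: image_comp comp_def)
qed simp

lemma valid_comp_snoc_cface:
  assumes "sgnset G"
  shows "vc (cface G) (ks @ [l]) \<longleftrightarrow> vc (cface G) ks \<and> l \<in> PC ks ` G"
proof (cases "vc (cface G) ks")
  case True
  then have "cm ks ` cface G = cface (PC ks ` G)" "sgnset (PC ks ` G)"
    using comp_map_cface[OF assms] by auto
  then show ?thesis using True cface_subset_facet_iff by (simp add: valid_comp_append)
qed (simp add: valid_comp_append)

text \<open>Every face in the family of a proper face is a face of the cube, so families are finite.\<close>
lemma finite_face_family: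
  assumes "proper_face g"
  shows "finite (face_family \<tau> g)"
proof -
  obtain G where sgG: "sgnset G" and g: "g = cface G" using assms by (rule proper_faceE)
  have "face_family \<tau> g \<subseteq> range cface"
    using comp_map_cface[OF sgG] g by (auto simp: face_family_def)
  moreover have "finite (range (cface :: 'n sidx set \<Rightarrow> _))" by simp
  ultimately show ?thesis by (rule finite_subset)
qed

lemma ridge_square:
  assumes "fst j \<noteq> fst l" "p \<in> cface {j, l}"
  shows "\<tau> (PS j l) (\<tau> j p) = \<tau> (PS l j) (\<tau> l p)"
proof -
  have lj: "fst l \<noteq> fst j" using assms(1) by simp
  have "\<tau> l ` cface {j, l} = cface {PS l j, \<omega> l}"
    using Psi_ridge(1)[OF lj] by (simp add: insert_commute)
  from tau_compat[OF assms(1) Psi_ridge(2)[OF assms(1), symmetric] Psi_ridge(2)[OF lj]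
      Psi_ridge(1)[OF assms(1)] this assms(2)]
  show ?thesis .
qed

end

locale strong_pairing = pairing +
  assumes strong: "strong_fps \<omega> \<tau>"
begin

lemma strong_agree:
  assumes "proper_face g" "vc g xs" "vc g ys" "cm xs ` g = cm ys ` g"
  shows "\<forall>p\<in>g. cm xs p = cm ys p" "\<forall>l. g \<subseteq> facet l \<longrightarrow> PC xs l = PC ys l"
  using strong assms unfolding strong_fps_def by blast+

end

section \<open>Counting the family of a codimension-one subface\<close>

lemma card_image_eq_if_same_fibres:
  assumes "\<forall>x\<in>L. \<forall>y\<in>L. \<alpha> x = \<alpha> y \<longleftrightarrow> \<beta> x = \<beta> y"
  shows "card (\<alpha> ` L) = card (\<beta> ` L)"
proof -
  define h where "h a = \<beta> (inv_into L \<alpha> a)" for a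
  have h: "h (\<alpha> x) = \<beta> x" if "x \<in> L" for x
    using assms that inv_into_into[of "\<alpha> x" \<alpha> L] f_inv_into_f[of "\<alpha> x" \<alpha> L] unfolding h_def by blast
  have "bij_betw h (\<alpha> ` L) (\<beta> ` L)"
  proof (rule bij_betw_imageI)
    show "inj_on h (\<alpha> ` L)" using assms h by (auto intro!: inj_onI)
    show "h ` \<alpha> ` L = \<beta> ` L" using h by (auto simp: image_comp cong: image_cong)
  qed
  then show ?thesis by (rule bij_betw_same_card)
qed

text \<open>For a valid composition ks of f, \<open>lower ks = ks(e)\<close> and \<open>crossed ks\<close> is its
  neighbour across the facet \<open>\<Psi>\<^sub>k\<^sub>s k\<close> that cuts e out of f.\<close>
locale codim_one = strong_pairing +
  fixes k :: "'a::finite sidx" and J :: "'a sidx set"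
  assumes sgnset_K: "sgnset (insert k J)" and k_notin_J: "k \<notin> J" and J_nonempty: "J \<noteq> {}"
begin

abbreviation e_face where "e_face \<equiv> cface (insert k J)"
abbreviation f_face where "f_face \<equiv> cface J"

definition paths :: "'a sidx list set" where
  "paths = {ks. vc f_face ks}"

definition lower :: "'a sidx list \<Rightarrow> (real ^ 'a) set" where
  "lower ks = cm ks ` e_face"

definition crossed :: "'a sidx list \<Rightarrow> (real ^ 'a) set" where
  "crossed ks = \<tau> (PC ks k) ` lower ks"

lemma sgnset_J: "sgnset J"
  using sgnset_K sgnset_subset by blast

lemma e_sub_f: "e_face \<subseteq> f_face"
  by (rule cface_antimono) blast

lemma paths_valid_e: "ks \<in> paths \<Longrightarrow> vc e_face ks"
  unfolding paths_def using valid_comp_subface e_sub_f by blast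

lemma paths_snoc: "ks @ [l] \<in> paths \<longleftrightarrow> ks \<in> paths \<and> l \<in> PC ks ` J"
  unfolding paths_def using valid_comp_snoc_cface[OF sgnset_J] by simp

lemma lower_snoc: "lower (ks @ [l]) = \<tau> l ` lower ks"
  unfolding lower_def by (rule comp_map_snoc_image)

lemma crossed_snoc: "crossed (ks @ [l]) = \<tau> (PS l (PC ks k)) ` \<tau> l ` lower ks"
  by (simp add: crossed_def lower_snoc Psi_comp_snoc)

lemma lower_in_facet:
  assumes "vc e_face ks" "x \<in> insert k J"
  shows "cm ks ` e_face \<subseteq> facet (PC ks x)"
proof -
  have img: "cm ks ` e_face = cface (PC ks ` insert k J)" and sg: "sgnset (PC ks ` insert k J)"
    using comp_map_cface[OF sgnset_K assms(1)] by auto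
  show ?thesis unfolding img using cface_subset_facet_iff[OF sg] assms(2) by blast
qed

lemma Psi_agree:
  assumes "vc e_face xs" "vc e_face ys" "cm xs ` e_face = cm ys ` e_face" "l \<in> insert k J"
  shows "PC xs l = PC ys l"
proof -
  have "e_face \<subseteq> facet l" using assms(4) cface_subset_facet_iff[OF sgnset_K] by blast
  then show ?thesis using strong_agree(2)[OF proper_faceI[OF sgnset_K] assms(1-3)] by blast
qed

lemma crossed_valid:
  assumes "ks \<in> paths"
  shows "vc e_face (ks @ [PC ks k])" "crossed ks = cm (ks @ [PC ks k]) ` e_face"
  using paths_valid_e[OF assms] valid_comp_snoc_cface[OF sgnset_K]
  by (auto simp: crossed_def lower_def comp_map_snoc_image)

text \<open>ks(e) determines ks(f) by strongness (b), and conversely by strongness (a).\<close>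
lemma lower_eq_iff:
  assumes "ks \<in> paths" "ls \<in> paths"
  shows "lower ks = lower ls \<longleftrightarrow> cm ks ` f_face = cm ls ` f_face"
proof
  assume "lower ks = lower ls"
  then have "PC ks l = PC ls l" if "l \<in> J" for l
    using Psi_agree[OF paths_valid_e[OF assms(1)] paths_valid_e[OF assms(2)]] that
    unfolding lower_def by blast
  then have "PC ks ` J = PC ls ` J" by (simp cong: image_cong)
  then show "cm ks ` f_face = cm ls ` f_face"
    using comp_map_cface[OF sgnset_J] assms unfolding paths_def by simp
next
  assume "cm ks ` f_face = cm ls ` f_face"
  then have "\<forall>p\<in>f_face. cm ks p = cm ls p"
    using strong_agree(1)[OF proper_faceI[OF sgnset_J J_nonempty]] assms unfolding paths_def by blast
  then show "lower ks = lower ls" unfolding lower_def using e_sub_f by (intro image_cong) auto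
qed

text \<open>The crossing facet \<open>\<Psi>\<^sub>k\<^sub>s k\<close> is determined by ks(e), and crossing is invertible.\<close>
lemma crossed_eq_iff:
  assumes "ks \<in> paths" "ls \<in> paths"
  shows "crossed ks = crossed ls \<longleftrightarrow> lower ks = lower ls"
proof
  assume cr: "crossed ks = crossed ls"
  have "PC (ks @ [PC ks k]) k = PC (ls @ [PC ls k]) k"
    using Psi_agree[OF crossed_valid(1)[OF assms(1)] crossed_valid(1)[OF assms(2)]] cr
    by (simp add: crossed_valid(2)[OF assms(1)] crossed_valid(2)[OF assms(2)])
  then have same: "PC ks k = PC ls k" by (simp add: Psi_comp_snoc) (metis omega_involution)
  have uncross: "lower ms = \<tau> (\<omega> (PC ms k)) ` crossed ms" if "ms \<in> paths" for ms
    using tau_image_cancel[OF lower_in_facet[OF paths_valid_e[OF that]]]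
    by (simp add: crossed_def lower_def)
  show "lower ks = lower ls" using uncross[OF assms(1)] uncross[OF assms(2)] cr same by simp
next
  assume "lower ks = lower ls"
  moreover have "PC ks k = PC ls k"
    using Psi_agree[OF paths_valid_e[OF assms(1)] paths_valid_e[OF assms(2)]] calculation
    unfolding lower_def by blast
  ultimately show "crossed ks = crossed ls" by (simp add: crossed_def)
qed

lemma card_lower: "card (lower ` paths) = card (face_family \<tau> f_face)"
proof -
  have "face_family \<tau> f_face = (\<lambda>ks. cm ks ` f_face) ` paths"
    by (auto simp: face_family_def paths_def)
  moreover have "card (lower ` paths) = card ((\<lambda>ks. cm ks ` f_face) ` paths)"
    by (rule card_image_eq_if_same_fibres) (use lower_eq_iff in blast)
  ultimately show ?thesis by simp
qed

lemma card_crossed: "card (crossed ` paths) = card (lower ` paths)"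
  by (rule card_image_eq_if_same_fibres) (use crossed_eq_iff in blast)

lemma lower_step_closed:
  assumes ks: "ks \<in> paths" and x: "x \<in> insert k J"
  shows "\<tau> (PC ks x) ` lower ks \<in> lower ` paths \<union> crossed ` paths"
proof (cases "x = k")
  case True
  then show ?thesis using ks by (simp add: crossed_def)
next
  case False
  then have "ks @ [PC ks x] \<in> paths" using ks x paths_snoc by auto
  then show ?thesis using lower_snoc by (metis UnI1 imageI)
qed

lemma crossing_commutes:
  assumes ks: "ks \<in> paths" and x: "x \<in> J"
  shows "\<tau> (PS (PC ks k) (PC ks x)) ` \<tau> (PC ks k) ` lower ks
       = \<tau> (PS (PC ks x) (PC ks k)) ` \<tau> (PC ks x) ` lower ks"
proof -
  have img: "lower ks = cface (PC ks ` insert k J)" and sg: "sgnset (PC ks ` insert k J)"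
    and inj: "inj_on (PC ks) (insert k J)"
    using comp_map_cface[OF sgnset_K paths_valid_e[OF ks]] unfolding lower_def by auto
  have "PC ks x \<noteq> PC ks k" using inj_onD[OF inj, of x k] x k_notin_J by blast
  then have distinct: "fst (PC ks k) \<noteq> fst (PC ks x)" using sgnset_fst_neq[OF sg] x by blast
  have "lower ks \<subseteq> cface {PC ks k, PC ks x}" unfolding img using x by (intro cface_antimono) auto
  then have "\<forall>p\<in>lower ks. \<tau> (PS (PC ks k) (PC ks x)) (\<tau> (PC ks k) p)
                         = \<tau> (PS (PC ks x) (PC ks k)) (\<tau> (PC ks x) p)"
    using ridge_square[OF distinct] by blast
  then show ?thesis unfolding image_image by (intro image_cong) auto
qed

text \<open>Moving the neighbour across one of its facets also gives a face of one of the two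
  kinds: back to \<open>ks(e)\<close>, or the neighbour of a longer composition.\<close>
lemma crossed_step_closed:
  assumes ks: "ks \<in> paths" and x: "x \<in> insert k J"
  shows "\<tau> (PS (PC ks k) (PC ks x)) ` crossed ks \<in> lower ` paths \<union> crossed ` paths"
proof (cases "x = k")
  case True
  have "\<tau> (\<omega> (PC ks k)) ` crossed ks = lower ks"
    using tau_image_cancel[OF lower_in_facet[OF paths_valid_e[OF ks]]]
    by (simp add: crossed_def lower_def)
  then show ?thesis using True ks by simp
next
  case False
  then have xJ: "x \<in> J" using x by blast
  then have ext: "ks @ [PC ks x] \<in> paths" using ks paths_snoc by blast
  have "crossed (ks @ [PC ks x]) = \<tau> (PS (PC ks x) (PC ks k)) ` \<tau> (PC ks x) ` lower ks"
    by (rule crossed_snoc)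
  also have "\<dots> = \<tau> (PS (PC ks k) (PC ks x)) ` crossed ks"
    using crossing_commutes[OF ks xJ] by (simp add: crossed_def)
  finally show ?thesis using ext by (metis UnI2 imageI)
qed

lemma face_family_e: "face_family \<tau> e_face = lower ` paths \<union> crossed ` paths"
proof
  show "lower ` paths \<union> crossed ` paths \<subseteq> face_family \<tau> e_face"
    using paths_valid_e crossed_valid unfolding face_family_def lower_def by blast
  have "cm ls ` e_face \<in> lower ` paths \<union> crossed ` paths" if "vc e_face ls" for ls
    using that
  proof (induction ls rule: rev_induct)
    case Nil
    have "[] \<in> paths" "lower [] = cm [] ` e_face" by (simp_all add: paths_def lower_def)
    then show ?case by blast
  next
    case (snoc j ls)
    have ls: "vc e_face ls" and "j \<in> PC ls ` insert k J"
      using snoc.prems valid_comp_snoc_cface[OF sgnset_K] by auto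
    then obtain x where x: "x \<in> insert k J" and j: "j = PC ls x" by blast
    have step: "cm (ls @ [j]) ` e_face = \<tau> j ` cm ls ` e_face" by (rule comp_map_snoc_image)
    obtain ks where ks: "ks \<in> paths" and "cm ls ` e_face = lower ks \<or> cm ls ` e_face = crossed ks"
      using snoc.IH[OF ls] by blast
    then consider (low) "cm ls ` e_face = lower ks" | (cross) "cm ls ` e_face = crossed ks" by blast
    then show ?case
    proof cases
      case low
      then have "j = PC ks x"
        using Psi_agree[OF ls paths_valid_e[OF ks] _ x] j unfolding lower_def by simp
      then show ?thesis using step low lower_step_closed[OF ks x] by simp
    next
      case cross
      then have "j = PS (PC ks k) (PC ks x)"
        using Psi_agree[OF ls crossed_valid(1)[OF ks] _ x] j crossed_valid(2)[OF ks]
        by (simp add: Psi_comp_snoc)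
      then show ?thesis using step cross crossed_step_closed[OF ks x] by simp
    qed
  qed
  then show "face_family \<tau> e_face \<subseteq> lower ` paths \<union> crossed ` paths"
    unfolding face_family_def by blast
qed

text \<open>If a neighbour is of the first kind, so is the neighbour after one more step:
  the crossing of the two facets commutes.\<close>
lemma crossed_in_lower_snoc:
  assumes ext: "ks @ [l] \<in> paths" and cr: "crossed ks \<in> lower ` paths"
  shows "crossed (ks @ [l]) \<in> lower ` paths"
proof -
  have ks: "ks \<in> paths" and "l \<in> PC ks ` J" using ext paths_snoc by auto
  then obtain x where x: "x \<in> J" and l: "l = PC ks x" by blast
  obtain ks0 where ks0: "ks0 \<in> paths" and eq: "crossed ks = lower ks0" using cr by blast
  have "PC ks0 x = PC (ks @ [PC ks k]) x"
    using Psi_agree[OF paths_valid_e[OF ks0] crossed_valid(1)[OF ks]] eq x crossed_valid(2)[OF ks]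
    by (simp add: lower_def)
  then have x0: "PC ks0 x = PS (PC ks k) l" by (simp add: Psi_comp_snoc l)
  have ext0: "ks0 @ [PC ks0 x] \<in> paths" using ks0 x paths_snoc by blast
  have "crossed (ks @ [l]) = \<tau> (PS l (PC ks k)) ` \<tau> l ` lower ks" by (rule crossed_snoc)
  also have "\<dots> = \<tau> (PS (PC ks k) l) ` crossed ks"
    using crossing_commutes[OF ks x] by (simp add: crossed_def l)
  also have "\<dots> = lower (ks0 @ [PC ks0 x])" by (simp add: eq lower_snoc x0)
  finally show ?thesis using ext0 by blast
qed

text \<open>The converse step: go one step further and back, which returns to \<open>ks(e)\<close>.\<close>
lemma crossed_in_lower_step:
  assumes ext: "ks @ [l] \<in> paths"
  shows "crossed (ks @ [l]) \<in> lower ` paths \<longleftrightarrow> crossed ks \<in> lower ` paths"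
proof
  assume cr: "crossed (ks @ [l]) \<in> lower ` paths"
  have ks: "ks \<in> paths" and "l \<in> PC ks ` J" using ext paths_snoc by auto
  then obtain x where x: "x \<in> J" and l: "l = PC ks x" by blast
  have "\<omega> l = PC (ks @ [l]) x" by (simp add: Psi_comp_snoc l)
  then have round_trip: "(ks @ [l]) @ [\<omega> l] \<in> paths" using ext x paths_snoc by blast
  have "lower ((ks @ [l]) @ [\<omega> l]) = \<tau> (\<omega> l) ` \<tau> l ` lower ks" by (simp only: lower_snoc)
  also have "\<dots> = lower ks"
    using tau_image_cancel[OF lower_in_facet[OF paths_valid_e[OF ks] insertI2[OF x]]]
    by (simp add: l lower_def)
  finally have "lower ((ks @ [l]) @ [\<omega> l]) = lower ks" .
  then have "crossed ((ks @ [l]) @ [\<omega> l]) = crossed ks" using crossed_eq_iff[OF round_trip ks] by blast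
  then show "crossed ks \<in> lower ` paths" using crossed_in_lower_snoc[OF round_trip cr] by simp
qed (rule crossed_in_lower_snoc[OF ext])

lemma crossed_in_lower_uniform:
  "ks \<in> paths \<Longrightarrow> crossed ks \<in> lower ` paths \<longleftrightarrow> crossed [] \<in> lower ` paths"
proof (induction ks rule: rev_induct)
  case (snoc l ks)
  then show ?case using crossed_in_lower_step paths_snoc by blast
qed simp

lemma finite_kinds: "finite (lower ` paths)" "finite (crossed ` paths)"
  using finite_face_family[OF proper_faceI[OF sgnset_K]] face_family_e by auto

lemma kinds_overlap:
  assumes "lower ` paths \<inter> crossed ` paths \<noteq> {}"
  shows "crossed ` paths = lower ` paths"
proof -
  obtain ks1 where "ks1 \<in> paths" "crossed ks1 \<in> lower ` paths" using assms by blast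
  then have "crossed [] \<in> lower ` paths" using crossed_in_lower_uniform by blast
  then have "crossed ` paths \<subseteq> lower ` paths" using crossed_in_lower_uniform by blast
  then show ?thesis using card_subset_eq[OF finite_kinds(1) _ card_crossed] by blast
qed

text \<open>Disjoint kinds give \<open>2|f^|\<close> faces, identical kinds give \<open>|f^|\<close>.\<close>
theorem card_face_family_e:
  "card (face_family \<tau> e_face) = card (face_family \<tau> f_face)
   \<or> card (face_family \<tau> e_face) = 2 * card (face_family \<tau> f_face)"
proof (cases "lower ` paths \<inter> crossed ` paths = {}")
  case True
  then have "card (face_family \<tau> e_face) = card (lower ` paths) + card (crossed ` paths)"
    using face_family_e card_Un_disjoint[OF finite_kinds] by simp
  then show ?thesis using card_lower card_crossed by simp
next
  case False
  then show ?thesis using kinds_overlap face_family_e card_lower by simp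
qed

end

text \<open>The main theorem: reduce to sign sets and count.\<close>
theorem mainTheorem5:
  fixes \<omega> :: "'n::finite sidx \<Rightarrow> 'n sidx"
    and \<tau> :: "'n sidx \<Rightarrow> real ^ 'n \<Rightarrow> real ^ 'n"
    and e f :: "(real ^ 'n) set"
  assumes "strong_fps \<omega> \<tau>" and "regular_fps \<omega> \<tau>"
    and "proper_face e" and "proper_face f" and "e \<subseteq> f"
    and "aff_dim f - aff_dim e = 1"
  shows "card (face_family \<tau> e) = card (face_family \<tau> f)
       \<or> card (face_family \<tau> e) = 2 * card (face_family \<tau> f)"
proof -
  obtain k J where K: "sgnset (insert k J)" "k \<notin> J" "J \<noteq> {}"
    and e: "e = cface (insert k J)" and f: "f = cface J"
    using codim_one_faceE[OF assms(3-6)] by blast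
  have "fps \<omega> \<tau>" using assms(1) by (simp add: strong_fps_def)
  then interpret codim_one \<omega> \<tau> k J
    using assms(1) K by unfold_locales
  show ?thesis using card_face_family_e e f by simp
qed

end
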